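(* Let $P:\mathcal{C}^{\mathrm{op}}\to\mathbf{Hey}$ be a Gödel hyperdoctrine such that the bottom element $\bot$ is a quantifier-free predicate. Then $P$ satisfies Markov's Rule: for all objects $A,B$ of $\mathcal{C}$ and every quantifier-free $\alpha_D\in P(A\times B)$, if \[ b:B\;|\;\top\vdash\neg\forall a.\alpha_D(a,b)\] then \[ b:B\;|\;\top\vdash\exists a.\neg\alpha_D(a,b).\]
   Context: A hyperdoctrine is a functor $P:\mathcal{C}^{\mathrm{op}}\to\mathbf{Hey}$ from a cartesian closed category $\mathcal{C}$ to Heyting algebras such that each $P_f$ has a left adjoint $\exists_f$ and a right adjoint $\forall_f$ satisfying Beck–Chevalley. A Gödel hyperdoctrine is a hyperdoctrine which (as a functor to $\mathbf{Pos}$) is a Gödel doctrine. $\neg\phi$ denotes $\phi\rightarrow\bot$. A doctrine $P:\mathcal{C}^{\mathrm{op}}\to\mathbf{Pos}$ ($\mathcal{C}$ with finite products) is existential/universal if reindexing along each product projection $\pi$ has a left adjoint $\exists_\pi$ / right adjoint $\forall_\pi$ satisfying Beck–Chevalley along pullbacks of projections. Notation: $b:B\;|\;\phi\vdash\psi$ means $\phi\le\psi$ in $P(B)$; $\exists a.\psi(a,b)$, $\forall a.\psi(a,b)$ denote the quantifiers along the projection $A\times B\to B$; substitution is reindexing. In an existential doctrine, $\alpha\in P(I)$ is existential-free if for every $f:A\to I$, every $B$ and every $\beta\in P(A\times B)$ with $P_f\alpha\le\exists_{\pi_A}\beta$ there is $g:A\to B$ with $P_f\alpha\le P_{\langle1_A,g\rangle}\beta$.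 In a universal doctrine $Q$, $\alpha\in Q(I)$ is universal-free if for every $f:A\to I$, every $B$ and every $\beta\in Q(A\times B)$ with $\forall_{\pi_A}\beta\le Q_f\alpha$ there is $g:A\to B$ with $Q_{\langle1_A,g\rangle}\beta\le Q_f\alpha$. Enough existential-free (universal-free) predicates: every $\alpha\in P(I)$ equals $\exists_{\pi_I}\beta$ (resp. $\forall_{\pi_I}\beta$) for some $A$ and existential-free (universal-free) $\beta\in P(I\times A)$. A Gödel doctrine: (1) $\mathcal{C}$ cartesian closed; (2) $P$ existential and universal; (3) $P$ has enough existential-free predicates; (4) existential-free predicates are stable under $\forall_\pi$ for projections $\pi$; (5) the sub-doctrine $P'$ of existential-free predicates (a universal doctrine) has enough universal-free predicates. A predicate is quantifier-free if it is existential-free in $P$ and universal-free in $P'$; "$\bot$ is quantifier-free" means $\bot\in P(I)$ is quantifier-free for every object $I$. *)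

theory Defs
  imports Main
begin

section \<open>Categories (single-sorted encoding: every element of 'm is an arrow)\<close>

record ('o, 'm) ccat =
  cdom  :: "'m \<Rightarrow> 'o"
  ccod  :: "'m \<Rightarrow> 'o"
  ccomp :: "'m \<Rightarrow> 'm \<Rightarrow> 'm"   (* ccomp g f = g \<circ> f *)
  cid   :: "'o \<Rightarrow> 'm"
  cone  :: "'o"                     (* terminal object *)
  cprod :: "'o \<Rightarrow> 'o \<Rightarrow> 'o"
  cpr1  :: "'o \<Rightarrow> 'o \<Rightarrow> 'm"
  cpr2  :: "'o \<Rightarrow> 'o \<Rightarrow> 'm"
  cexp  :: "'o \<Rightarrow> 'o \<Rightarrow> 'o"         (* cexp B D = D^B *)
  cev   :: "'o \<Rightarrow> 'o \<Rightarrow> 'm"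

definition hom :: "('o, 'm, 'x) ccat_scheme \<Rightarrow> 'm \<Rightarrow> 'o \<Rightarrow> 'o \<Rightarrow> bool" where
  "hom C f A B \<longleftrightarrow> cdom C f = A \<and> ccod C f = B"

definition category :: "('o, 'm, 'x) ccat_scheme \<Rightarrow> bool" where
  "category C \<longleftrightarrow>
     (\<forall>f g. ccod C f = cdom C g \<longrightarrow> hom C (ccomp C g f) (cdom C f) (ccod C g)) \<and>
     (\<forall>A. hom C (cid C A) A A) \<and>
     (\<forall>f. ccomp C f (cid C (cdom C f)) = f \<and> ccomp C (cid C (ccod C f)) f = f) \<and>
     (\<forall>f g h. ccod C f = cdom C g \<and> ccod C g = cdom C h \<longrightarrow>
        ccomp C h (ccomp C g f) = ccomp C (ccomp C h g) f)"

definition cartesian :: "('o, 'm, 'x) ccat_scheme \<Rightarrow> bool" where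
  "cartesian C \<longleftrightarrow> category C \<and>
     (\<forall>A. \<exists>!t. hom C t A (cone C)) \<and>
     (\<forall>A B. hom C (cpr1 C A B) (cprod C A B) A \<and> hom C (cpr2 C A B) (cprod C A B) B \<and>
        (\<forall>D f g. hom C f D A \<and> hom C g D B \<longrightarrow>
           (\<exists>!h. hom C h D (cprod C A B) \<and> ccomp C (cpr1 C A B) h = f \<and> ccomp C (cpr2 C A B) h = g)))"

definition pair :: "('o, 'm, 'x) ccat_scheme \<Rightarrow> 'm \<Rightarrow> 'm \<Rightarrow> 'm" where
  "pair C f g = (THE h. hom C h (cdom C f) (cprod C (ccod C f) (ccod C g)) \<and>
                   ccomp C (cpr1 C (ccod C f) (ccod C g)) h = f \<and>
                   ccomp C (cpr2 C (ccod C f) (ccod C g)) h = g)"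

definition cartesian_closed :: "('o, 'm, 'x) ccat_scheme \<Rightarrow> bool" where
  "cartesian_closed C \<longleftrightarrow> cartesian C \<and>
     (\<forall>B D. hom C (cev C B D) (cprod C (cexp C B D) B) D \<and>
        (\<forall>A f. hom C f (cprod C A B) D \<longrightarrow>
           (\<exists>!h. hom C h A (cexp C B D) \<and>
              ccomp C (cev C B D) (pair C (ccomp C h (cpr1 C A B)) (cpr2 C A B)) = f)))"

definition is_pullback :: "('o, 'm, 'x) ccat_scheme \<Rightarrow> 'm \<Rightarrow> 'm \<Rightarrow> 'm \<Rightarrow> 'm \<Rightarrow> bool" where
  "is_pullback C f g p q \<longleftrightarrow>
     ccod C f = ccod C g \<and> cdom C p = cdom C q \<and> ccod C p = cdom C f \<and> ccod C q = cdom C g \<and>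
     ccomp C f p = ccomp C g q \<and>
     (\<forall>u v. cdom C u = cdom C v \<and> ccod C u = cdom C f \<and> ccod C v = cdom C g \<and>
            ccomp C f u = ccomp C g v \<longrightarrow>
        (\<exists>!h. hom C h (cdom C u) (cdom C p) \<and> ccomp C p h = u \<and> ccomp C q h = v))"

record ('o, 'm, 'p) hdoc =
  pc    :: "'o \<Rightarrow> 'p set"                 (* carrier of P(I) *)
  ple   :: "'o \<Rightarrow> 'p \<Rightarrow> 'p \<Rightarrow> bool"
  ptop  :: "'o \<Rightarrow> 'p"
  pbot  :: "'o \<Rightarrow> 'p"
  pconj :: "'o \<Rightarrow> 'p \<Rightarrow> 'p \<Rightarrow> 'p"
  pdisj :: "'o \<Rightarrow> 'p \<Rightarrow> 'p \<Rightarrow> 'p"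
  pimp  :: "'o \<Rightarrow> 'p \<Rightarrow> 'p \<Rightarrow> 'p"
  preidx :: "'m \<Rightarrow> 'p \<Rightarrow> 'p"             (* P_f : P(cod f) \<rightarrow> P(dom f) *)
  pex   :: "'m \<Rightarrow> 'p \<Rightarrow> 'p"              (* \<exists>_f : P(dom f) \<rightarrow> P(cod f) *)
  pall  :: "'m \<Rightarrow> 'p \<Rightarrow> 'p"              (* \<forall>_f : P(dom f) \<rightarrow> P(cod f) *)

definition heyting_fibre :: "('o, 'm, 'p, 'x) hdoc_scheme \<Rightarrow> 'o \<Rightarrow> bool" where
  "heyting_fibre P I \<longleftrightarrow>
     (\<forall>x\<in>pc P I. ple P I x x) \<and>
     (\<forall>x\<in>pc P I. \<forall>y\<in>pc P I. \<forall>z\<in>pc P I. ple P I x y \<and> ple P I y z \<longrightarrow> ple P I x z) \<and>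
     (\<forall>x\<in>pc P I. \<forall>y\<in>pc P I. ple P I x y \<and> ple P I y x \<longrightarrow> x = y) \<and>
     ptop P I \<in> pc P I \<and> pbot P I \<in> pc P I \<and>
     (\<forall>x\<in>pc P I. ple P I x (ptop P I) \<and> ple P I (pbot P I) x) \<and>
     (\<forall>x\<in>pc P I. \<forall>y\<in>pc P I.
        pconj P I x y \<in> pc P I \<and> pdisj P I x y \<in> pc P I \<and> pimp P I x y \<in> pc P I) \<and>
     (\<forall>x\<in>pc P I. \<forall>y\<in>pc P I. \<forall>z\<in>pc P I.
        (ple P I z (pconj P I x y) \<longleftrightarrow> ple P I z x \<and> ple P I z y) \<and>
        (ple P I (pdisj P I x y) z \<longleftrightarrow> ple P I x z \<and> ple P I y z) \<and>
        (ple P I (pconj P I z x) y \<longleftrightarrow> ple P I z (pimp P I x y)))"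

definition hyperdoctrine :: "('o, 'm, 'x) ccat_scheme \<Rightarrow> ('o, 'm, 'p, 'y) hdoc_scheme \<Rightarrow> bool" where
  "hyperdoctrine C P \<longleftrightarrow> cartesian_closed C \<and>
     (\<forall>I. heyting_fibre P I) \<and>
     \<comment> \<open>P is a functor C^op \<rightarrow> Hey\<close>
     (\<forall>f x. x \<in> pc P (ccod C f) \<longrightarrow> preidx P f x \<in> pc P (cdom C f)) \<and>
     (\<forall>A. \<forall>x\<in>pc P A. preidx P (cid C A) x = x) \<and>
     (\<forall>f g. ccod C f = cdom C g \<longrightarrow>
        (\<forall>x\<in>pc P (ccod C g). preidx P (ccomp C g f) x = preidx P f (preidx P g x))) \<and>
     (\<forall>f. preidx P f (ptop P (ccod C f)) = ptop P (cdom C f) \<and>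
          preidx P f (pbot P (ccod C f)) = pbot P (cdom C f) \<and>
          (\<forall>x\<in>pc P (ccod C f). \<forall>y\<in>pc P (ccod C f).
             preidx P f (pconj P (ccod C f) x y) = pconj P (cdom C f) (preidx P f x) (preidx P f y) \<and>
             preidx P f (pdisj P (ccod C f) x y) = pdisj P (cdom C f) (preidx P f x) (preidx P f y) \<and>
             preidx P f (pimp P (ccod C f) x y) = pimp P (cdom C f) (preidx P f x) (preidx P f y))) \<and>
     \<comment> \<open>left and right adjoints to every reindexing\<close>
     (\<forall>f. \<forall>x\<in>pc P (cdom C f).
        pex P f x \<in> pc P (ccod C f) \<and> pall P f x \<in> pc P (ccod C f) \<and>
        (\<forall>y\<in>pc P (ccod C f).
           (ple P (ccod C f) (pex P f x) y \<longleftrightarrow> ple P (cdom C f) x (preidx P f y)) \<and>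
           (ple P (ccod C f) y (pall P f x) \<longleftrightarrow> ple P (cdom C f) (preidx P f y) x))) \<and>
     \<comment> \<open>Beck--Chevalley\<close>
     (\<forall>f g p q. is_pullback C f g p q \<longrightarrow>
        (\<forall>x\<in>pc P (cdom C f).
           preidx P g (pex P f x) = pex P q (preidx P p x) \<and>
           preidx P g (pall P f x) = pall P q (preidx P p x)))"

definition existential_free :: "('o, 'm, 'x) ccat_scheme \<Rightarrow> ('o, 'm, 'p, 'y) hdoc_scheme \<Rightarrow> 'o \<Rightarrow> 'p \<Rightarrow> bool" where
  "existential_free C P I \<alpha> \<longleftrightarrow> \<alpha> \<in> pc P I \<and>
     (\<forall>A f B \<beta>. hom C f A I \<and> \<beta> \<in> pc P (cprod C A B) \<and>
        ple P A (preidx P f \<alpha>) (pex P (cpr1 C A B) \<beta>) \<longrightarrow>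
        (\<exists>g. hom C g A B \<and> ple P A (preidx P f \<alpha>) (preidx P (pair C (cid C A) g) \<beta>)))"

text \<open>Universal-free predicates of the sub-doctrine P' of existential-free predicates.\<close>
definition universal_free' :: "('o, 'm, 'x) ccat_scheme \<Rightarrow> ('o, 'm, 'p, 'y) hdoc_scheme \<Rightarrow> 'o \<Rightarrow> 'p \<Rightarrow> bool" where
  "universal_free' C P I \<alpha> \<longleftrightarrow> existential_free C P I \<alpha> \<and>
     (\<forall>A f B \<beta>. hom C f A I \<and> existential_free C P (cprod C A B) \<beta> \<and>
        ple P A (pall P (cpr1 C A B) \<beta>) (preidx P f \<alpha>) \<longrightarrow>
        (\<exists>g. hom C g A B \<and> ple P A (preidx P (pair C (cid C A) g) \<beta>) (preidx P f \<alpha>)))"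

definition quantifier_free :: "('o, 'm, 'x) ccat_scheme \<Rightarrow> ('o, 'm, 'p, 'y) hdoc_scheme \<Rightarrow> 'o \<Rightarrow> 'p \<Rightarrow> bool" where
  "quantifier_free C P I \<alpha> \<longleftrightarrow> existential_free C P I \<alpha> \<and> universal_free' C P I \<alpha>"

definition goedel_hyperdoctrine :: "('o, 'm, 'x) ccat_scheme \<Rightarrow> ('o, 'm, 'p, 'y) hdoc_scheme \<Rightarrow> bool" where
  "goedel_hyperdoctrine C P \<longleftrightarrow> hyperdoctrine C P \<and>
     \<comment> \<open>(3) enough existential-free predicates\<close>
     (\<forall>I. \<forall>\<alpha>\<in>pc P I. \<exists>A \<beta>. existential_free C P (cprod C I A) \<beta> \<and> \<alpha> = pex P (cpr1 C I A) \<beta>) \<and>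
     \<comment> \<open>(4) existential-free predicates are stable under universal quantification along projections\<close>
     (\<forall>A B \<beta>. existential_free C P (cprod C A B) \<beta> \<longrightarrow>
        existential_free C P A (pall P (cpr1 C A B) \<beta>) \<and>
        existential_free C P B (pall P (cpr2 C A B) \<beta>)) \<and>
     \<comment> \<open>(5) P' has enough universal-free predicates\<close>
     (\<forall>I \<alpha>. existential_free C P I \<alpha> \<longrightarrow>
        (\<exists>A \<beta>. universal_free' C P (cprod C I A) \<beta> \<and> \<alpha> = pall P (cpr1 C I A) \<beta>))"

definition pneg :: "('o, 'm, 'p, 'y) hdoc_scheme \<Rightarrow> 'o \<Rightarrow> 'p \<Rightarrow> 'p" where
  "pneg P I x = pimp P I x (pbot P I)"

end

theory Submission
  imports Defs
begin

(* From \<top> \<turnstile> \<not>\<forall>a. \<alpha>(a,b) we get \<forall>a. \<alpha>(a,b) \<turnstile> \<bottom>. As \<bottom> is universal-free in the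
   doctrine of existential-free predicates and \<alpha> is existential-free, this inequality has a
   witness g : B \<rightarrow> A with \<alpha>(g b, b) \<turnstile> \<bottom>, i.e. \<top> \<turnstile> \<not>\<alpha>(g b, b). Finally
   \<not>\<alpha>(g b, b) \<turnstile> \<exists>a. \<not>\<alpha>(a,b), since reindexing along the section \<langle>g, 1\<rangle> of the
   projection lies below \<exists> along it. *)

lemma category_hom_comp:
  assumes "category C" "hom C f X Y" "hom C g Y Z"
  shows "hom C (ccomp C g f) X Z"
proof -
  have "\<forall>f g. ccod C f = cdom C g \<longrightarrow> hom C (ccomp C g f) (cdom C f) (ccod C g)"
    using assms(1) unfolding category_def by (elim conjE) assumption
  then show ?thesis using assms(2,3) unfolding hom_def by auto
qed

lemma category_hom_id: "category C \<Longrightarrow> hom C (cid C X) X X"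
  unfolding category_def by blast

lemma category_comp_id_right:
  assumes "category C" "hom C f X Y"
  shows "ccomp C f (cid C X) = f"
proof -
  have "\<forall>f. ccomp C f (cid C (cdom C f)) = f \<and> ccomp C (cid C (ccod C f)) f = f"
    using assms(1) unfolding category_def by (elim conjE) assumption
  then show ?thesis using assms(2) unfolding hom_def by auto
qed

lemma category_comp_assoc:
  assumes "category C" "hom C f X Y" "hom C g Y Z" "hom C h Z W"
  shows "ccomp C h (ccomp C g f) = ccomp C (ccomp C h g) f"
proof -
  have "\<forall>f g h. ccod C f = cdom C g \<and> ccod C g = cdom C h \<longrightarrow>
      ccomp C h (ccomp C g f) = ccomp C (ccomp C h g) f"
    using assms(1) unfolding category_def by (elim conjE) assumption
  then show ?thesis using assms(2-4) unfolding hom_def by auto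
qed

lemma cartesian_category: "cartesian C \<Longrightarrow> category C"
  unfolding cartesian_def by blast

lemma hom_cpr1: "cartesian C \<Longrightarrow> hom C (cpr1 C A B) (cprod C A B) A"
  and hom_cpr2: "cartesian C \<Longrightarrow> hom C (cpr2 C A B) (cprod C A B) B"
  unfolding cartesian_def by blast+

lemma
  assumes "cartesian C" "hom C f D A" "hom C g D B"
  shows hom_pair: "hom C (pair C f g) D (cprod C A B)"
    and cpr1_pair: "ccomp C (cpr1 C A B) (pair C f g) = f"
    and cpr2_pair: "ccomp C (cpr2 C A B) (pair C f g) = g"
proof -
  have "\<exists>!h. hom C h D (cprod C A B) \<and> ccomp C (cpr1 C A B) h = f \<and> ccomp C (cpr2 C A B) h = g"
    using assms unfolding cartesian_def by blast
  moreover have "pair C f g = (THE h. hom C h D (cprod C A B) \<and>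
      ccomp C (cpr1 C A B) h = f \<and> ccomp C (cpr2 C A B) h = g)"
    using assms(2,3) unfolding pair_def hom_def by simp
  ultimately have "hom C (pair C f g) D (cprod C A B) \<and>
      ccomp C (cpr1 C A B) (pair C f g) = f \<and> ccomp C (cpr2 C A B) (pair C f g) = g"
    using theI' by simp
  then show "hom C (pair C f g) D (cprod C A B)" "ccomp C (cpr1 C A B) (pair C f g) = f"
    "ccomp C (cpr2 C A B) (pair C f g) = g"
    by simp_all
qed

lemma cartesian_prod_ext:
  assumes "cartesian C" "hom C h D (cprod C A B)" "hom C k D (cprod C A B)"
    and "ccomp C (cpr1 C A B) h = ccomp C (cpr1 C A B) k"
    and "ccomp C (cpr2 C A B) h = ccomp C (cpr2 C A B) k"
  shows "h = k"
proof -
  have cat: "category C" using assms(1) by (rule cartesian_category)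
  have "hom C (ccomp C (cpr1 C A B) h) D A" "hom C (ccomp C (cpr2 C A B) h) D B"
    using category_hom_comp[OF cat assms(2)] hom_cpr1[OF assms(1)] hom_cpr2[OF assms(1)] by blast+
  then have "\<exists>!u. hom C u D (cprod C A B) \<and> ccomp C (cpr1 C A B) u = ccomp C (cpr1 C A B) h
      \<and> ccomp C (cpr2 C A B) u = ccomp C (cpr2 C A B) h"
    using assms(1) unfolding cartesian_def by blast
  then obtain u where u: "\<And>v. hom C v D (cprod C A B) \<and> ccomp C (cpr1 C A B) v = ccomp C (cpr1 C A B) h
      \<and> ccomp C (cpr2 C A B) v = ccomp C (cpr2 C A B) h \<Longrightarrow> v = u"
    by blast
  have "h = u" by (rule u) (use assms(2) in simp)
  moreover have "k = u" by (rule u) (use assms(3-5) in simp)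
  ultimately show ?thesis by simp
qed

definition swap :: "('o, 'm, 'x) ccat_scheme \<Rightarrow> 'o \<Rightarrow> 'o \<Rightarrow> 'm" where
  "swap C A B = pair C (cpr2 C A B) (cpr1 C A B)"

lemma
  assumes "cartesian C"
  shows hom_swap: "hom C (swap C A B) (cprod C A B) (cprod C B A)"
    and cpr1_swap: "ccomp C (cpr1 C B A) (swap C A B) = cpr2 C A B"
    and cpr2_swap: "ccomp C (cpr2 C B A) (swap C A B) = cpr1 C A B"
  unfolding swap_def
  using hom_pair[OF assms hom_cpr2[OF assms] hom_cpr1[OF assms]]
    cpr1_pair[OF assms hom_cpr2[OF assms] hom_cpr1[OF assms]]
    cpr2_pair[OF assms hom_cpr2[OF assms] hom_cpr1[OF assms]]
  by simp_all

lemma swap_swap: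
  assumes "cartesian C"
  shows "ccomp C (swap C B A) (swap C A B) = cid C (cprod C A B)"
proof (rule cartesian_prod_ext[OF assms])
  have cat: "category C" using assms by (rule cartesian_category)
  have s: "hom C (swap C A B) (cprod C A B) (cprod C B A)"
    and s': "hom C (swap C B A) (cprod C B A) (cprod C A B)"
    by (rule hom_swap[OF assms])+
  show "hom C (ccomp C (swap C B A) (swap C A B)) (cprod C A B) (cprod C A B)"
    using category_hom_comp[OF cat s s'] .
  show "hom C (cid C (cprod C A B)) (cprod C A B) (cprod C A B)"
    using category_hom_id[OF cat] .
  show "ccomp C (cpr1 C A B) (ccomp C (swap C B A) (swap C A B)) =
      ccomp C (cpr1 C A B) (cid C (cprod C A B))"
    using category_comp_assoc[OF cat s s' hom_cpr1[OF assms]] cpr1_swap[OF assms] cpr2_swap[OF assms]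
      category_comp_id_right[OF cat hom_cpr1[OF assms]] by simp
  show "ccomp C (cpr2 C A B) (ccomp C (swap C B A) (swap C A B)) =
      ccomp C (cpr2 C A B) (cid C (cprod C A B))"
    using category_comp_assoc[OF cat s s' hom_cpr2[OF assms]] cpr1_swap[OF assms] cpr2_swap[OF assms]
      category_comp_id_right[OF cat hom_cpr2[OF assms]] by simp
qed

context
  fixes P :: "('o, 'm, 'p, 'y) hdoc_scheme" and I :: 'o
  assumes fibre: "heyting_fibre P I"
begin

lemma fibre_refl:
  assumes "x \<in> pc P I"
  shows "ple P I x x"
proof -
  have "\<forall>x\<in>pc P I. ple P I x x"
    using fibre unfolding heyting_fibre_def by (elim conjE) assumption
  then show ?thesis using assms ..
qed

lemma fibre_trans:
  assumes "x \<in> pc P I" "y \<in> pc P I" "z \<in> pc P I" "ple P I x y" "ple P I y z"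
  shows "ple P I x z"
proof -
  have "\<forall>x\<in>pc P I. \<forall>y\<in>pc P I. \<forall>z\<in>pc P I. ple P I x y \<and> ple P I y z \<longrightarrow> ple P I x z"
    using fibre unfolding heyting_fibre_def by (elim conjE) assumption
  then show ?thesis using assms by blast
qed

lemma fibre_antisym:
  assumes "x \<in> pc P I" "y \<in> pc P I" "ple P I x y" "ple P I y x"
  shows "x = y"
proof -
  have "\<forall>x\<in>pc P I. \<forall>y\<in>pc P I. ple P I x y \<and> ple P I y x \<longrightarrow> x = y"
    using fibre unfolding heyting_fibre_def by (elim conjE) assumption
  then show ?thesis using assms by blast
qed

lemma fibre_top_in: "ptop P I \<in> pc P I"
  using fibre unfolding heyting_fibre_def by (elim conjE) assumption

lemma fibre_bot_in: "pbot P I \<in> pc P I"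
  using fibre unfolding heyting_fibre_def by (elim conjE) assumption

lemma fibre_le_top:
  assumes "x \<in> pc P I"
  shows "ple P I x (ptop P I)"
proof -
  have "\<forall>x\<in>pc P I. ple P I x (ptop P I) \<and> ple P I (pbot P I) x"
    using fibre unfolding heyting_fibre_def by (elim conjE) assumption
  then show ?thesis using assms by blast
qed

lemma
  assumes "x \<in> pc P I" "y \<in> pc P I"
  shows fibre_conj_in: "pconj P I x y \<in> pc P I"
    and fibre_imp_in: "pimp P I x y \<in> pc P I"
proof -
  have "\<forall>x\<in>pc P I. \<forall>y\<in>pc P I.
      pconj P I x y \<in> pc P I \<and> pdisj P I x y \<in> pc P I \<and> pimp P I x y \<in> pc P I"
    using fibre unfolding heyting_fibre_def by (elim conjE) assumption
  then show "pconj P I x y \<in> pc P I" "pimp P I x y \<in> pc P I" using assms by blast+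
qed

lemma
  assumes "x \<in> pc P I" "y \<in> pc P I" "z \<in> pc P I"
  shows fibre_le_conj_iff: "ple P I z (pconj P I x y) \<longleftrightarrow> ple P I z x \<and> ple P I z y"
    and fibre_le_imp_iff: "ple P I z (pimp P I x y) \<longleftrightarrow> ple P I (pconj P I z x) y"
proof -
  have "\<forall>x\<in>pc P I. \<forall>y\<in>pc P I. \<forall>z\<in>pc P I.
      (ple P I z (pconj P I x y) \<longleftrightarrow> ple P I z x \<and> ple P I z y) \<and>
      (ple P I (pdisj P I x y) z \<longleftrightarrow> ple P I x z \<and> ple P I y z) \<and>
      (ple P I (pconj P I z x) y \<longleftrightarrow> ple P I z (pimp P I x y))"
    using fibre unfolding heyting_fibre_def by (elim conjE) assumption
  then show "ple P I z (pconj P I x y) \<longleftrightarrow> ple P I z x \<and> ple P I z y"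
    and "ple P I z (pimp P I x y) \<longleftrightarrow> ple P I (pconj P I z x) y"
    using assms by blast+
qed

lemma fibre_conj_absorb1:
  assumes x: "x \<in> pc P I" and y: "y \<in> pc P I" and le: "ple P I x y"
  shows "pconj P I x y = x"
proof (rule fibre_antisym)
  show c: "pconj P I x y \<in> pc P I" using fibre_conj_in[OF x y] .
  show "x \<in> pc P I" by (fact x)
  show "ple P I (pconj P I x y) x"
    using fibre_le_conj_iff[OF x y c] fibre_refl[OF c] by simp
  show "ple P I x (pconj P I x y)"
    using fibre_le_conj_iff[OF x y x] fibre_refl[OF x] le by simp
qed

lemma fibre_top_le_neg_iff:
  assumes x: "x \<in> pc P I"
  shows "ple P I (ptop P I) (pneg P I x) \<longleftrightarrow> ple P I x (pbot P I)"
proof -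
  have c: "pconj P I (ptop P I) x \<in> pc P I" using fibre_conj_in[OF fibre_top_in x] .
  have "pconj P I (ptop P I) x = x"
  proof (rule fibre_antisym[OF c x])
    show "ple P I (pconj P I (ptop P I) x) x"
      using fibre_le_conj_iff[OF fibre_top_in x c] fibre_refl[OF c] by simp
    show "ple P I x (pconj P I (ptop P I) x)"
      using fibre_le_conj_iff[OF fibre_top_in x x] fibre_refl[OF x] fibre_le_top[OF x] by simp
  qed
  then show ?thesis
    unfolding pneg_def using fibre_le_imp_iff[OF x fibre_bot_in fibre_top_in] by simp
qed

end

context
  fixes C :: "('o, 'm, 'x) ccat_scheme" and P :: "('o, 'm, 'p, 'y) hdoc_scheme"
  assumes hd: "hyperdoctrine C P"
begin

lemma hyperdoctrine_cartesian: "cartesian C"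
proof -
  have "cartesian_closed C" using hd unfolding hyperdoctrine_def by (elim conjE) assumption
  then show ?thesis unfolding cartesian_closed_def by (elim conjE) assumption
qed

lemma hyperdoctrine_fibre: "heyting_fibre P I"
proof -
  have "\<forall>I. heyting_fibre P I" using hd unfolding hyperdoctrine_def by (elim conjE) assumption
  then show ?thesis ..
qed

lemma reindex_in:
  assumes "hom C f X Y" "x \<in> pc P Y"
  shows "preidx P f x \<in> pc P X"
proof -
  have "\<forall>f x. x \<in> pc P (ccod C f) \<longrightarrow> preidx P f x \<in> pc P (cdom C f)"
    using hd unfolding hyperdoctrine_def by (elim conjE) assumption
  then show ?thesis using assms unfolding hom_def by auto
qed

lemma reindex_id:
  assumes "x \<in> pc P X"
  shows "preidx P (cid C X) x = x"
proof -
  have "\<forall>A. \<forall>x\<in>pc P A. preidx P (cid C A) x = x"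
    using hd unfolding hyperdoctrine_def by (elim conjE) assumption
  then show ?thesis using assms by blast
qed

lemma reindex_comp:
  assumes "hom C f X Y" "hom C g Y Z" "x \<in> pc P Z"
  shows "preidx P (ccomp C g f) x = preidx P f (preidx P g x)"
proof -
  have "\<forall>f g. ccod C f = cdom C g \<longrightarrow>
      (\<forall>x\<in>pc P (ccod C g). preidx P (ccomp C g f) x = preidx P f (preidx P g x))"
    using hd unfolding hyperdoctrine_def by (elim conjE) assumption
  then show ?thesis using assms unfolding hom_def by auto
qed

lemma
  assumes f: "hom C f X Y"
  shows reindex_bot: "preidx P f (pbot P Y) = pbot P X"
    and reindex_conj: "\<lbrakk>x \<in> pc P Y; y \<in> pc P Y\<rbrakk>
      \<Longrightarrow> preidx P f (pconj P Y x y) = pconj P X (preidx P f x) (preidx P f y)"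
    and reindex_imp: "\<lbrakk>x \<in> pc P Y; y \<in> pc P Y\<rbrakk>
      \<Longrightarrow> preidx P f (pimp P Y x y) = pimp P X (preidx P f x) (preidx P f y)"
proof -
  have "\<forall>f. preidx P f (ptop P (ccod C f)) = ptop P (cdom C f) \<and>
      preidx P f (pbot P (ccod C f)) = pbot P (cdom C f) \<and>
      (\<forall>x\<in>pc P (ccod C f). \<forall>y\<in>pc P (ccod C f).
         preidx P f (pconj P (ccod C f) x y) = pconj P (cdom C f) (preidx P f x) (preidx P f y) \<and>
         preidx P f (pdisj P (ccod C f) x y) = pdisj P (cdom C f) (preidx P f x) (preidx P f y) \<and>
         preidx P f (pimp P (ccod C f) x y) = pimp P (cdom C f) (preidx P f x) (preidx P f y))"
    using hd unfolding hyperdoctrine_def by (elim conjE) assumption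
  then have "preidx P f (pbot P Y) = pbot P X \<and>
      (\<forall>x\<in>pc P Y. \<forall>y\<in>pc P Y.
         preidx P f (pconj P Y x y) = pconj P X (preidx P f x) (preidx P f y) \<and>
         preidx P f (pimp P Y x y) = pimp P X (preidx P f x) (preidx P f y))"
    using f unfolding hom_def by auto
  then show "preidx P f (pbot P Y) = pbot P X"
    and "\<lbrakk>x \<in> pc P Y; y \<in> pc P Y\<rbrakk>
      \<Longrightarrow> preidx P f (pconj P Y x y) = pconj P X (preidx P f x) (preidx P f y)"
    and "\<lbrakk>x \<in> pc P Y; y \<in> pc P Y\<rbrakk>
      \<Longrightarrow> preidx P f (pimp P Y x y) = pimp P X (preidx P f x) (preidx P f y)"
    by simp_all
qed

lemma reindex_neg: "\<lbrakk>hom C f X Y; x \<in> pc P Y\<rbrakk> \<Longrightarrow> preidx P f (pneg P Y x) = pneg P X (preidx P f x)"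
  unfolding pneg_def
  by (simp add: reindex_imp reindex_bot fibre_bot_in[OF hyperdoctrine_fibre])

lemma reindex_mono:
  assumes f: "hom C f X Y" and x: "x \<in> pc P Y" and y: "y \<in> pc P Y" and le: "ple P Y x y"
  shows "ple P X (preidx P f x) (preidx P f y)"
proof -
  have "preidx P f x = preidx P f (pconj P Y x y)"
    using fibre_conj_absorb1[OF hyperdoctrine_fibre x y le] by simp
  also have "\<dots> = pconj P X (preidx P f x) (preidx P f y)"
    using reindex_conj[OF f x y] .
  finally show ?thesis
    using reindex_in[OF f] x y hyperdoctrine_fibre
    by (metis fibre_conj_in fibre_le_conj_iff fibre_refl)
qed

lemma
  assumes f: "hom C f X Y" and x: "x \<in> pc P X"
  shows ex_in: "pex P f x \<in> pc P Y"
    and all_in: "pall P f x \<in> pc P Y"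
    and ex_le_iff: "y \<in> pc P Y \<Longrightarrow> ple P Y (pex P f x) y \<longleftrightarrow> ple P X x (preidx P f y)"
    and le_all_iff: "y \<in> pc P Y \<Longrightarrow> ple P Y y (pall P f x) \<longleftrightarrow> ple P X (preidx P f y) x"
proof -
  have "\<forall>f. \<forall>x\<in>pc P (cdom C f).
      pex P f x \<in> pc P (ccod C f) \<and> pall P f x \<in> pc P (ccod C f) \<and>
      (\<forall>y\<in>pc P (ccod C f).
         (ple P (ccod C f) (pex P f x) y \<longleftrightarrow> ple P (cdom C f) x (preidx P f y)) \<and>
         (ple P (ccod C f) y (pall P f x) \<longleftrightarrow> ple P (cdom C f) (preidx P f y) x))"
    using hd unfolding hyperdoctrine_def by (elim conjE) assumption
  then have "pex P f x \<in> pc P Y \<and> pall P f x \<in> pc P Y \<and>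
      (\<forall>y\<in>pc P Y. (ple P Y (pex P f x) y \<longleftrightarrow> ple P X x (preidx P f y)) \<and>
         (ple P Y y (pall P f x) \<longleftrightarrow> ple P X (preidx P f y) x))"
    using f x unfolding hom_def by auto
  then show "pex P f x \<in> pc P Y" "pall P f x \<in> pc P Y"
    and "y \<in> pc P Y \<Longrightarrow> ple P Y (pex P f x) y \<longleftrightarrow> ple P X x (preidx P f y)"
    and "y \<in> pc P Y \<Longrightarrow> ple P Y y (pall P f x) \<longleftrightarrow> ple P X (preidx P f y) x"
    by simp_all
qed

lemma le_reindex_ex: "\<lbrakk>hom C f X Y; x \<in> pc P X\<rbrakk> \<Longrightarrow> ple P X x (preidx P f (pex P f x))"
  using ex_le_iff ex_in fibre_refl[OF hyperdoctrine_fibre] by blast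

lemma reindex_all_le: "\<lbrakk>hom C f X Y; x \<in> pc P X\<rbrakk> \<Longrightarrow> ple P X (preidx P f (pall P f x)) x"
  using le_all_iff all_in fibre_refl[OF hyperdoctrine_fibre] by blast

lemma reindex_section_le_ex:
  assumes f: "hom C f X Y" and s: "hom C s Y X" and fs: "ccomp C f s = cid C Y"
    and x: "x \<in> pc P X"
  shows "ple P Y (preidx P s x) (pex P f x)"
proof -
  have ex: "pex P f x \<in> pc P Y" using ex_in[OF f x] .
  have "ple P Y (preidx P s x) (preidx P s (preidx P f (pex P f x)))"
    using reindex_mono[OF s x reindex_in[OF f ex] le_reindex_ex[OF f x]] .
  also have "preidx P s (preidx P f (pex P f x)) = pex P f x"
    using reindex_comp[OF s f ex] fs reindex_id[OF ex] by simp
  finally show ?thesis .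
qed

lemma all_reindex_split_epi_le:
  assumes f: "hom C f X Y" and g: "hom C g Y X" and fg: "ccomp C f g = cid C Y"
    and p': "hom C p' X B" and p: "hom C p Y B" and p'g: "ccomp C p' g = p"
    and x: "x \<in> pc P Y"
  shows "ple P B (pall P p' (preidx P f x)) (pall P p x)"
proof -
  have fx: "preidx P f x \<in> pc P X" using reindex_in[OF f x] .
  have a: "pall P p' (preidx P f x) \<in> pc P B" using all_in[OF p' fx] .
  have "preidx P p (pall P p' (preidx P f x)) = preidx P g (preidx P p' (pall P p' (preidx P f x)))"
    using reindex_comp[OF g p' a] p'g by simp
  moreover have "ple P Y (preidx P g (preidx P p' (pall P p' (preidx P f x)))) (preidx P g (preidx P f x))"
    using reindex_mono[OF g reindex_in[OF p' a] fx reindex_all_le[OF p' fx]] .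
  moreover have "preidx P g (preidx P f x) = x"
    using reindex_comp[OF g f x] fg reindex_id[OF x] by simp
  ultimately show ?thesis
    using le_all_iff[OF p x a] by simp
qed

lemma existential_free_reindex:
  assumes s: "hom C s J I" and ef: "existential_free C P I \<alpha>"
  shows "existential_free C P J (preidx P s \<alpha>)"
  unfolding existential_free_def
proof (intro conjI allI impI)
  have \<alpha>: "\<alpha> \<in> pc P I" using ef unfolding existential_free_def by simp
  then show "preidx P s \<alpha> \<in> pc P J" using reindex_in[OF s] by simp
  fix A f B \<beta>
  assume "hom C f A J \<and> \<beta> \<in> pc P (cprod C A B) \<and>
    ple P A (preidx P f (preidx P s \<alpha>)) (pex P (cpr1 C A B) \<beta>)"
  then have f: "hom C f A J" and \<beta>: "\<beta> \<in> pc P (cprod C A B)"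
    and le: "ple P A (preidx P (ccomp C s f) \<alpha>) (pex P (cpr1 C A B) \<beta>)"
    using reindex_comp[OF _ s \<alpha>] by auto
  have "hom C (ccomp C s f) A I"
    using category_hom_comp[OF cartesian_category[OF hyperdoctrine_cartesian] f s] .
  then show "\<exists>g. hom C g A B \<and> ple P A (preidx P f (preidx P s \<alpha>)) (preidx P (pair C (cid C A) g) \<beta>)"
    using ef \<beta> le reindex_comp[OF f s \<alpha>] unfolding existential_free_def by metis
qed

lemma universal_free'_witness:
  assumes uf: "universal_free' C P I \<alpha>" and ef: "existential_free C P (cprod C I A) \<beta>"
    and le: "ple P I (pall P (cpr1 C I A) \<beta>) \<alpha>"
  shows "\<exists>g. hom C g I A \<and> ple P I (preidx P (pair C (cid C I) g) \<beta>) \<alpha>"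
proof -
  have "hom C (cid C I) I I"
    using category_hom_id[OF cartesian_category[OF hyperdoctrine_cartesian]] .
  moreover have "\<alpha> \<in> pc P I" using uf unfolding universal_free'_def existential_free_def by simp
  ultimately show ?thesis
    using uf ef le reindex_id unfolding universal_free'_def by metis
qed

(* Universal-freeness speaks of quantifiers along cpr1, so \<alpha> is first moved along the swap. *)
lemma ex_refuting_section:
  assumes uf: "universal_free' C P B (pbot P B)" and ef: "existential_free C P (cprod C A B) \<alpha>"
    and le: "ple P B (pall P (cpr2 C A B) \<alpha>) (pbot P B)"
  shows "\<exists>h. hom C h B (cprod C A B) \<and> ccomp C (cpr2 C A B) h = cid C B \<and>
    ple P B (preidx P h \<alpha>) (pbot P B)"
proof -
  have cart: "cartesian C" by (rule hyperdoctrine_cartesian)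
  have cat: "category C" using cart by (rule cartesian_category)
  have \<alpha>: "\<alpha> \<in> pc P (cprod C A B)" using ef unfolding existential_free_def by simp
  have s: "hom C (swap C B A) (cprod C B A) (cprod C A B)" using hom_swap[OF cart] .
  define \<beta> where "\<beta> = preidx P (swap C B A) \<alpha>"
  have \<beta>: "\<beta> \<in> pc P (cprod C B A)" unfolding \<beta>_def using reindex_in[OF s \<alpha>] .
  have "ple P B (pall P (cpr1 C B A) \<beta>) (pall P (cpr2 C A B) \<alpha>)"
    unfolding \<beta>_def using all_reindex_split_epi_le[OF s hom_swap[OF cart] swap_swap[OF cart]
      hom_cpr1[OF cart] hom_cpr2[OF cart] cpr1_swap[OF cart] \<alpha>] .
  then have "ple P B (pall P (cpr1 C B A) \<beta>) (pbot P B)"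
    by (rule fibre_trans[OF hyperdoctrine_fibre all_in[OF hom_cpr1[OF cart] \<beta>]
      all_in[OF hom_cpr2[OF cart] \<alpha>] fibre_bot_in[OF hyperdoctrine_fibre] _ le])
  then obtain g where g: "hom C g B A"
    and g_refutes: "ple P B (preidx P (pair C (cid C B) g) \<beta>) (pbot P B)"
    using universal_free'_witness[OF uf existential_free_reindex[OF s ef, folded \<beta>_def]] by auto
  define k where "k = pair C (cid C B) g"
  have k: "hom C k B (cprod C B A)" and cpr1_k: "ccomp C (cpr1 C B A) k = cid C B"
    unfolding k_def using hom_pair[OF cart category_hom_id[OF cat] g]
      cpr1_pair[OF cart category_hom_id[OF cat] g] by simp_all
  show ?thesis
  proof (intro exI conjI)
    show "hom C (ccomp C (swap C B A) k) B (cprod C A B)" using category_hom_comp[OF cat k s] .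
    show "ccomp C (cpr2 C A B) (ccomp C (swap C B A) k) = cid C B"
      using category_comp_assoc[OF cat k s hom_cpr2[OF cart]] cpr2_swap[OF cart] cpr1_k by simp
    show "ple P B (preidx P (ccomp C (swap C B A) k) \<alpha>) (pbot P B)"
      using reindex_comp[OF k s \<alpha>] g_refutes unfolding \<beta>_def k_def by simp
  qed
qed

lemma markov_rule:
  assumes uf: "universal_free' C P B (pbot P B)" and ef: "existential_free C P (cprod C A B) \<alpha>"
    and hyp: "ple P B (ptop P B) (pneg P B (pall P (cpr2 C A B) \<alpha>))"
  shows "ple P B (ptop P B) (pex P (cpr2 C A B) (pneg P (cprod C A B) \<alpha>))"
proof -
  have cart: "cartesian C" by (rule hyperdoctrine_cartesian)
  have p: "hom C (cpr2 C A B) (cprod C A B) B" using hom_cpr2[OF cart] .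
  have \<alpha>: "\<alpha> \<in> pc P (cprod C A B)" using ef unfolding existential_free_def by simp
  have \<nu>: "pneg P (cprod C A B) \<alpha> \<in> pc P (cprod C A B)"
    unfolding pneg_def using fibre_imp_in[OF hyperdoctrine_fibre \<alpha> fibre_bot_in[OF hyperdoctrine_fibre]] .
  have "ple P B (pall P (cpr2 C A B) \<alpha>) (pbot P B)"
    using hyp fibre_top_le_neg_iff[OF hyperdoctrine_fibre all_in[OF p \<alpha>]] by simp
  then obtain h where h: "hom C h B (cprod C A B)" and sec: "ccomp C (cpr2 C A B) h = cid C B"
    and h_refutes: "ple P B (preidx P h \<alpha>) (pbot P B)"
    using ex_refuting_section[OF uf ef] by auto
  have "ple P B (ptop P B) (preidx P h (pneg P (cprod C A B) \<alpha>))"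
    using h_refutes reindex_neg[OF h \<alpha>] fibre_top_le_neg_iff[OF hyperdoctrine_fibre reindex_in[OF h \<alpha>]]
    by simp
  moreover have "ple P B (preidx P h (pneg P (cprod C A B) \<alpha>)) (pex P (cpr2 C A B) (pneg P (cprod C A B) \<alpha>))"
    using reindex_section_le_ex[OF p h sec \<nu>] .
  ultimately show ?thesis
    using fibre_trans[OF hyperdoctrine_fibre fibre_top_in[OF hyperdoctrine_fibre] reindex_in[OF h \<nu>] ex_in[OF p \<nu>]]
    by simp
qed

end

theorem corollary1:
  fixes C :: "('o, 'm, 'x) ccat_scheme" and P :: "('o, 'm, 'p, 'y) hdoc_scheme"
  assumes "goedel_hyperdoctrine C P"
    and "\<forall>I. quantifier_free C P I (pbot P I)"
  shows "\<forall>A B \<alpha>. quantifier_free C P (cprod C A B) \<alpha> \<longrightarrow>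
           ple P B (ptop P B) (pneg P B (pall P (cpr2 C A B) \<alpha>)) \<longrightarrow>
           ple P B (ptop P B) (pex P (cpr2 C A B) (pneg P (cprod C A B) \<alpha>))"
proof (intro allI impI)
  fix A B \<alpha>
  assume qf: "quantifier_free C P (cprod C A B) \<alpha>"
    and hyp: "ple P B (ptop P B) (pneg P B (pall P (cpr2 C A B) \<alpha>))"
  have hd: "hyperdoctrine C P" using assms(1) unfolding goedel_hyperdoctrine_def by simp
  have uf: "universal_free' C P B (pbot P B)" using assms(2) unfolding quantifier_free_def by simp
  have ef: "existential_free C P (cprod C A B) \<alpha>" using qf unfolding quantifier_free_def by simp
  show "ple P B (ptop P B) (pex P (cpr2 C A B) (pneg P (cprod C A B) \<alpha>))"
    by (rule markov_rule[OF hd uf ef hyp])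
qed

end
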